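(* Let $\mu=\sum_{i=1}^m a_i\delta_{u_i}$ and $\nu=\sum_{j=1}^n b_j\delta_{v_j}$ be finitely supported finite measures on $S^2\subset\mathbb{R}^3$ (with $a_i,b_j>0$, $u_i,v_j\in S^2$), and let $(\gamma_0,\gamma_1)\in\Gamma(\mu,\nu)$. Then there exists a discrete semi-coupling $(A,B)\in\mathcal A(\mu,\nu)$ such that $$\int_{S^2\times S^2}\Big|\sqrt{\tfrac{d\gamma_0}{d\gamma}(u,v)}\,u-\sqrt{\tfrac{d\gamma_1}{d\gamma}(u,v)}\,v\Big|^2d\gamma(u,v)=\sum_{i=0}^m\sum_{j=0}^n\big|\sqrt{A_{ij}}\,u_i-\sqrt{B_{ij}}\,v_j\big|^2,$$ where $u_0=v_0=(1,0,0)\in S^2$ and $\gamma$ is a measure on $S^2\times S^2$ with $\gamma_0,\gamma_1\ll\gamma$.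
   Context: $\Gamma(\mu,\nu)$ is the set of pairs $(\gamma_0,\gamma_1)$ of finite Borel measures on $S^2\times S^2$ with $(\operatorname{Proj}_0)_\#\gamma_0=\mu$ and $(\operatorname{Proj}_1)_\#\gamma_1=\nu$. $\mathcal A(\mu,\nu)$ is the set of pairs $(A,B)$ of $(m+1)\times(n+1)$ matrices (indices $i=0,\dots,m$, $j=0,\dots,n$) with: $A_{ij},B_{ij}\ge0$; $a_i=\sum_{j=0}^nA_{ij}$ for $i=1,\dots,m$; $A_{0j}=0$ for all $j$; $b_j=\sum_{i=0}^mB_{ij}$ for $j=1,\dots,n$; $B_{i0}=0$ for all $i$. *)

theory Defs
  imports "HOL-Probability.Probability"
begin

definition S2 :: "(real^3) set" where
  "S2 = sphere 0 1"

definition borel_S2 :: "(real^3) measure" where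
  "borel_S2 = restrict_space borel S2"

definition borel_S2S2 :: "((real^3) \<times> (real^3)) measure" where
  "borel_S2S2 = restrict_space borel (S2 \<times> S2)"

definition e1 :: "real^3" where
  "e1 = vector [1, 0, 0]"

definition finite_borel_S2S2 :: "((real^3) \<times> (real^3)) measure \<Rightarrow> bool" where
  "finite_borel_S2S2 M \<longleftrightarrow> sets M = sets borel_S2S2 \<and> finite_measure M"

definition is_discrete_measure ::
  "(real^3) measure \<Rightarrow> nat \<Rightarrow> (nat \<Rightarrow> real) \<Rightarrow> (nat \<Rightarrow> real^3) \<Rightarrow> bool" where
  "is_discrete_measure M m a u \<longleftrightarrow> sets M = sets borel_S2 \<and>
     (\<forall>X \<in> sets borel_S2. emeasure M X = ennreal (\<Sum>i\<in>{1..m}. a i * indicator X (u i)))"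

definition Gamma ::
  "nat \<Rightarrow> (nat \<Rightarrow> real) \<Rightarrow> (nat \<Rightarrow> real^3) \<Rightarrow> nat \<Rightarrow> (nat \<Rightarrow> real) \<Rightarrow> (nat \<Rightarrow> real^3)
   \<Rightarrow> ((real^3) \<times> (real^3)) measure \<Rightarrow> ((real^3) \<times> (real^3)) measure \<Rightarrow> bool" where
  "Gamma m a u n b v \<gamma>0 \<gamma>1 \<longleftrightarrow>
     finite_borel_S2S2 \<gamma>0 \<and> finite_borel_S2S2 \<gamma>1 \<and>
     is_discrete_measure (distr \<gamma>0 borel_S2 fst) m a u \<and>
     is_discrete_measure (distr \<gamma>1 borel_S2 snd) n b v"

definition A_adm ::
  "nat \<Rightarrow> (nat \<Rightarrow> real) \<Rightarrow> nat \<Rightarrow> (nat \<Rightarrow> real)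
   \<Rightarrow> (nat \<Rightarrow> nat \<Rightarrow> real) \<Rightarrow> (nat \<Rightarrow> nat \<Rightarrow> real) \<Rightarrow> bool" where
  "A_adm m a n b A B \<longleftrightarrow>
     (\<forall>i\<le>m. \<forall>j\<le>n. A i j \<ge> 0 \<and> B i j \<ge> 0) \<and>
     (\<forall>i\<in>{1..m}. a i = (\<Sum>j\<le>n. A i j)) \<and>
     (\<forall>j\<le>n. A 0 j = 0) \<and>
     (\<forall>j\<in>{1..n}. b j = (\<Sum>i\<le>m. B i j)) \<and>
     (\<forall>i\<le>m. B i 0 = 0)"

end

theory Submission
  imports Defs
begin

text \<open>
Write c(s, x; r, y) = |sqrt s x - sqrt r y|^2 (\<open>cone_cost\<close>); it is homogeneous of degree one in (s, r),
and c(s, x; 0, y) = s, c(0, x; r, y) = r for unit vectors. As the marginals of \<gamma>_0 and \<gamma>_1 live on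
U = {u_i} and V = {v_j}, the density of \<gamma>_1 vanishes a.e. on U \<times> (S^2 - V), that of \<gamma>_0 on
(S^2 - U) \<times> V, and both vanish off (U \<times> S^2) \<union> (S^2 \<times> V); on an atom q \<in> U \<times> V homogeneity turns
the integrand times \<gamma>{q} into c(\<gamma>_0{q}, q_1; \<gamma>_1{q}, q_2). So for every admissible \<gamma> the cost is
  \<Sum>_{q \<in> U \<times> V} c(\<gamma>_0{q}, q_1; \<gamma>_1{q}, q_2) + \<gamma>_0(U \<times> (S^2 - V)) + \<gamma>_1((S^2 - U) \<times> V).
The matrices split each atom (u_i, v_j) among the indices carrying the same points, in proportion to
a_i and b_j (the u_i need not be distinct), and put the mass of \<gamma>_0 on {u_i} \<times> (S^2 - V) into A_i0
and that of \<gamma>_1 on (S^2 - U) \<times> {v_j} into B_0j; by homogeneity their cost is the same sum.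
\<close>

section \<open>The cone cost\<close>

definition cone_cost :: "real \<Rightarrow> 'a::real_normed_vector \<Rightarrow> real \<Rightarrow> 'a \<Rightarrow> real" where
  "cone_cost s x r y = (norm (sqrt s *\<^sub>R x - sqrt r *\<^sub>R y))\<^sup>2"

lemma cone_cost_nonneg: "cone_cost s x r y \<ge> 0"
  by (simp add: cone_cost_def)

lemma cone_cost_scale:
  assumes "0 \<le> t" "0 \<le> s" "0 \<le> r"
  shows "cone_cost (t * s) x (t * r) y = t * cone_cost s x r y"
proof -
  have "sqrt (t * s) *\<^sub>R x - sqrt (t * r) *\<^sub>R y = sqrt t *\<^sub>R (sqrt s *\<^sub>R x - sqrt r *\<^sub>R y)"
    by (simp add: real_sqrt_mult scaleR_diff_right)
  then show ?thesis
    using assms by (simp add: cone_cost_def power_mult_distrib)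
qed

lemma cone_cost_0_right: "norm x = 1 \<Longrightarrow> 0 \<le> s \<Longrightarrow> cone_cost s x 0 y = s"
  by (simp add: cone_cost_def power_mult_distrib)

lemma cone_cost_0_left: "norm y = 1 \<Longrightarrow> 0 \<le> r \<Longrightarrow> cone_cost 0 x r y = r"
  by (simp add: cone_cost_def power_mult_distrib)

lemma ennreal_cone_cost_mult_density:
  assumes N0: "N0 = r0 * e" and N1: "N1 = r1 * e" and "N0 \<noteq> \<top>" "N1 \<noteq> \<top>"
  shows "ennreal (cone_cost (enn2real r0) x (enn2real r1) y) * e
       = ennreal (cone_cost (enn2real N0) x (enn2real N1) y)"
proof (cases "e = \<top>")
  case True
  then have "r0 = 0" "r1 = 0"
    using assms by (auto simp: ennreal_mult_eq_top_iff)
  then show ?thesis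
    using N0 N1 by (simp add: cone_cost_def)
next
  case False
  then have e: "e = ennreal (enn2real e)"
    by (simp add: less_top)
  have "cone_cost (enn2real N0) x (enn2real N1) y = enn2real e * cone_cost (enn2real r0) x (enn2real r1) y"
    using cone_cost_scale[of "enn2real e" "enn2real r0" "enn2real r1" x y]
    by (simp add: N0 N1 enn2real_mult mult.commute)
  then show ?thesis
    by (subst e) (simp add: ennreal_mult'' cone_cost_nonneg mult.commute)
qed

section \<open>Splitting atoms among indices with the same location\<close>

definition atom_share :: "('i \<Rightarrow> real) \<Rightarrow> ('i \<Rightarrow> 'a) \<Rightarrow> 'i set \<Rightarrow> 'i \<Rightarrow> real" where
  "atom_share w \<phi> I i = w i / (\<Sum>k\<in>{k\<in>I. \<phi> k = \<phi> i}. w k)"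

lemma atom_share_nonneg: "(\<And>k. k \<in> I \<Longrightarrow> 0 \<le> w k) \<Longrightarrow> 0 \<le> w i \<Longrightarrow> 0 \<le> atom_share w \<phi> I i"
  unfolding atom_share_def by (intro divide_nonneg_nonneg sum_nonneg) auto

lemma sum_fiber_pos:
  fixes w :: "'i \<Rightarrow> real"
  assumes "finite I" "\<And>k. k \<in> I \<Longrightarrow> 0 < w k" "i \<in> I"
  shows "0 < (\<Sum>k\<in>{k\<in>I. \<phi> k = \<phi> i}. w k)"
  using assms by (intro sum_pos2[where i = i]) (auto intro: less_imp_le)

lemma atom_share_mult_sum_fiber:
  fixes w :: "'i \<Rightarrow> real"
  assumes "finite I" "\<And>k. k \<in> I \<Longrightarrow> 0 < w k" "i \<in> I"
  shows "atom_share w \<phi> I i * (\<Sum>k\<in>{k\<in>I. \<phi> k = \<phi> i}. w k) = w i"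
proof -
  have "0 < (\<Sum>k\<in>{k\<in>I. \<phi> k = \<phi> i}. w k)"
    using assms by (rule sum_fiber_pos)
  then show ?thesis
    by (simp add: atom_share_def)
qed

lemma sum_atom_share_mult:
  fixes w :: "'i \<Rightarrow> real"
  assumes I: "finite I" and w: "\<And>k. k \<in> I \<Longrightarrow> 0 < w k"
  shows "(\<Sum>i\<in>I. atom_share w \<phi> I i * h (\<phi> i)) = (\<Sum>x\<in>\<phi> ` I. h x)"
proof -
  have "(\<Sum>i\<in>I. atom_share w \<phi> I i * h (\<phi> i))
      = (\<Sum>x\<in>\<phi> ` I. \<Sum>i\<in>{i\<in>I. \<phi> i = x}. atom_share w \<phi> I i * h (\<phi> i))"
    using I by (rule sum.image_gen)
  also have "\<dots> = (\<Sum>x\<in>\<phi> ` I. h x)"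
  proof (rule sum.cong[OF refl])
    fix x assume "x \<in> \<phi> ` I"
    then obtain i where i: "i \<in> I" "\<phi> i = x" by blast
    let ?F = "{k\<in>I. \<phi> k = x}"
    have "0 < (\<Sum>k\<in>{k\<in>I. \<phi> k = \<phi> i}. w k)"
      using I w i(1) by (rule sum_fiber_pos)
    then have pos: "0 < (\<Sum>k\<in>?F. w k)"
      using i(2) by simp
    have "(\<Sum>k\<in>?F. atom_share w \<phi> I k * h (\<phi> k)) = (\<Sum>k\<in>?F. w k * (h x / (\<Sum>k\<in>?F. w k)))"
      by (rule sum.cong) (auto simp: atom_share_def)
    also have "\<dots> = (\<Sum>k\<in>?F. w k) * (h x / (\<Sum>k\<in>?F. w k))"
      by (rule sum_distrib_right[symmetric])
    also have "\<dots> = h x"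
      using pos by simp
    finally show "(\<Sum>k\<in>?F. atom_share w \<phi> I k * h (\<phi> k)) = h x" .
  qed
  finally show ?thesis .
qed

lemma closed_S2: "closed S2"
  by (simp add: S2_def)

lemma norm_S2: "x \<in> S2 \<Longrightarrow> norm x = 1"
  by (simp add: S2_def)

lemma space_borel_S2S2: "space borel_S2S2 = S2 \<times> S2"
  by (simp add: borel_S2S2_def space_restrict_space)

lemma sets_borel_S2_iff: "X \<in> sets borel_S2 \<longleftrightarrow> X \<in> sets borel \<and> X \<subseteq> S2"
  unfolding borel_S2_def
  by (subst sets_restrict_space_iff) (auto intro: borel_closed closed_S2)

lemma finite_in_sets_borel_S2: "finite F \<Longrightarrow> F \<subseteq> S2 \<Longrightarrow> F \<in> sets borel_S2"
  by (simp add: sets_borel_S2_iff borel_closed finite_imp_closed)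

lemma S2_Diff_in_sets_borel_S2: "F \<in> sets borel_S2 \<Longrightarrow> S2 - F \<in> sets borel_S2"
  by (auto simp: sets_borel_S2_iff intro: borel_closed closed_S2)

lemma S2_in_sets_borel_S2: "S2 \<in> sets borel_S2"
  by (simp add: sets_borel_S2_iff borel_closed closed_S2)

lemma measurable_fst_borel_S2: "fst \<in> measurable borel_S2S2 borel_S2"
  unfolding borel_S2S2_def borel_S2_def
  by (rule measurable_restrict_space3) (auto intro!: borel_measurable_continuous_onI continuous_intros)

lemma measurable_snd_borel_S2: "snd \<in> measurable borel_S2S2 borel_S2"
  unfolding borel_S2S2_def borel_S2_def
  by (rule measurable_restrict_space3) (auto intro!: borel_measurable_continuous_onI continuous_intros)

lemma Times_in_sets_borel_S2S2:
  assumes X: "X \<in> sets borel_S2" and Y: "Y \<in> sets borel_S2"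
  shows "X \<times> Y \<in> sets borel_S2S2"
proof -
  have "X \<times> Y = (fst -` X \<inter> space borel_S2S2) \<inter> (snd -` Y \<inter> space borel_S2S2)"
    using assms by (auto simp: space_borel_S2S2 sets_borel_S2_iff)
  then show ?thesis
    using measurable_sets[OF measurable_fst_borel_S2 X] measurable_sets[OF measurable_snd_borel_S2 Y]
    by simp
qed

lemma singleton_in_sets_borel_S2S2: "q \<in> S2 \<times> S2 \<Longrightarrow> {q} \<in> sets borel_S2S2"
  using Times_in_sets_borel_S2S2[of "{fst q}" "{snd q}"]
  by (cases q) (simp add: finite_in_sets_borel_S2)

lemma emeasure_distr_fst_borel_S2:
  assumes M: "sets M = sets borel_S2S2" and X: "X \<in> sets borel_S2"
  shows "emeasure (distr M borel_S2 fst) X = emeasure M (X \<times> S2)"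
proof -
  have "fst \<in> measurable M borel_S2"
    using measurable_fst_borel_S2 measurable_cong_sets[OF M refl] by blast
  moreover have "fst -` X \<inter> space M = X \<times> S2"
    using X sets_eq_imp_space_eq[OF M] by (auto simp: space_borel_S2S2 sets_borel_S2_iff)
  ultimately show ?thesis
    using emeasure_distr X by metis
qed

lemma emeasure_distr_snd_borel_S2:
  assumes M: "sets M = sets borel_S2S2" and Y: "Y \<in> sets borel_S2"
  shows "emeasure (distr M borel_S2 snd) Y = emeasure M (S2 \<times> Y)"
proof -
  have "snd \<in> measurable M borel_S2"
    using measurable_snd_borel_S2 measurable_cong_sets[OF M refl] by blast
  moreover have "snd -` Y \<inter> space M = S2 \<times> Y"
    using Y sets_eq_imp_space_eq[OF M] by (auto simp: space_borel_S2S2 sets_borel_S2_iff)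
  ultimately show ?thesis
    using emeasure_distr Y by metis
qed

lemma measure_Times_split_right:
  assumes M: "finite_borel_S2S2 M" and X: "X \<in> sets borel_S2" and Y: "Y \<in> sets borel_S2"
    and F: "finite F" "F \<subseteq> Y"
  shows "measure M (X \<times> Y) = measure M (X \<times> (Y - F)) + (\<Sum>y\<in>F. measure M (X \<times> {y}))"
proof -
  interpret finite_measure M
    using M by (simp add: finite_borel_S2S2_def)
  have sets_M: "sets M = sets borel_S2S2"
    using M by (simp add: finite_borel_S2S2_def)
  have FS2: "F \<subseteq> S2"
    using F Y by (auto simp: sets_borel_S2_iff)
  have "Y - F \<in> sets borel_S2"
    using Y F(1) FS2 by (auto simp: sets_borel_S2_iff intro: borel_closed finite_imp_closed)
  then have XYF: "X \<times> (Y - F) \<in> sets M"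
    using X sets_M by (simp add: Times_in_sets_borel_S2S2)
  have Xy: "X \<times> {y} \<in> sets M" if "y \<in> F" for y
    using that X FS2 sets_M by (auto intro!: Times_in_sets_borel_S2S2 finite_in_sets_borel_S2)
  have "X \<times> Y = X \<times> (Y - F) \<union> (\<Union>y\<in>F. X \<times> {y})"
    using F by auto
  then have "measure M (X \<times> Y) = measure M (X \<times> (Y - F)) + measure M (\<Union>y\<in>F. X \<times> {y})"
    using XYF Xy F(1) by (simp, intro finite_measure_Union) auto
  also have "measure M (\<Union>y\<in>F. X \<times> {y}) = (\<Sum>y\<in>F. measure M (X \<times> {y}))"
    using Xy F(1) by (intro finite_measure_finite_Union) (auto simp: disjoint_family_on_def)
  finally show ?thesis .
qed

lemma measure_Times_split_left:
  assumes M: "finite_borel_S2S2 M" and X: "X \<in> sets borel_S2" and Y: "Y \<in> sets borel_S2"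
    and F: "finite F" "F \<subseteq> X"
  shows "measure M (X \<times> Y) = measure M ((X - F) \<times> Y) + (\<Sum>x\<in>F. measure M ({x} \<times> Y))"
proof -
  interpret finite_measure M
    using M by (simp add: finite_borel_S2S2_def)
  have sets_M: "sets M = sets borel_S2S2"
    using M by (simp add: finite_borel_S2S2_def)
  have FS2: "F \<subseteq> S2"
    using F X by (auto simp: sets_borel_S2_iff)
  have "X - F \<in> sets borel_S2"
    using X F(1) FS2 by (auto simp: sets_borel_S2_iff intro: borel_closed finite_imp_closed)
  then have XFY: "(X - F) \<times> Y \<in> sets M"
    using Y sets_M by (simp add: Times_in_sets_borel_S2S2)
  have xY: "{x} \<times> Y \<in> sets M" if "x \<in> F" for x
    using that Y FS2 sets_M by (auto intro!: Times_in_sets_borel_S2S2 finite_in_sets_borel_S2)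
  have "X \<times> Y = (X - F) \<times> Y \<union> (\<Union>x\<in>F. {x} \<times> Y)"
    using F by auto
  then have "measure M (X \<times> Y) = measure M ((X - F) \<times> Y) + measure M (\<Union>x\<in>F. {x} \<times> Y)"
    using XFY xY F(1) by (simp, intro finite_measure_Union) auto
  also have "measure M (\<Union>x\<in>F. {x} \<times> Y) = (\<Sum>x\<in>F. measure M ({x} \<times> Y))"
    using xY F(1) by (intro finite_measure_finite_Union) (auto simp: disjoint_family_on_def)
  finally show ?thesis .
qed

section \<open>The cost integral\<close>

lemma (in sigma_finite_measure) AE_RN_deriv_eq_0:
  assumes "absolutely_continuous M N" "sets N = sets M" "A \<in> sets M" "emeasure N A = 0"
  shows "AE x in M. x \<in> A \<longrightarrow> RN_deriv M N x = 0"
proof -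
  have "A \<in> null_sets (density M (RN_deriv M N))"
    using assms by (simp add: density_RN_deriv null_sets_def)
  then show ?thesis
    by (simp add: null_sets_density_iff)
qed

lemma ennreal_cone_cost_split:
  fixes x y :: "'a::real_normed_vector"
  assumes "norm x = 1" "norm y = 1" "r0 \<noteq> \<top>" "r1 \<noteq> \<top>"
    and "x \<notin> U \<Longrightarrow> r0 = 0" "y \<notin> V \<Longrightarrow> r1 = 0"
  shows "ennreal (cone_cost (enn2real r0) x (enn2real r1) y) =
     (if x \<in> U \<and> y \<in> V then ennreal (cone_cost (enn2real r0) x (enn2real r1) y) else 0)
     + (if x \<in> U \<and> y \<notin> V then r0 else 0) + (if x \<notin> U \<and> y \<in> V then r1 else 0)"
  using assms by (auto simp: cone_cost_0_left cone_cost_0_right less_top cone_cost_def)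

lemma (in sigma_finite_measure) cone_cost_RN_deriv_singleton:
  assumes "finite_measure N0" "absolutely_continuous M N0" "sets N0 = sets M"
    and "finite_measure N1" "absolutely_continuous M N1" "sets N1 = sets M"
    and "{q} \<in> sets M"
  shows "ennreal (cone_cost (enn2real (RN_deriv M N0 q)) x (enn2real (RN_deriv M N1 q)) y) * emeasure M {q}
       = ennreal (cone_cost (measure N0 {q}) x (measure N1 {q}) y)"
  using ennreal_cone_cost_mult_density[OF RN_deriv_singleton[OF assms(2,3,7)] RN_deriv_singleton[OF assms(5,6,7)]]
    finite_measure.emeasure_finite[OF assms(1)] finite_measure.emeasure_finite[OF assms(4)]
  by (simp add: measure_def)

definition cone_cost_density ::
    "('a::real_normed_vector \<times> 'a) measure \<Rightarrow> ('a \<times> 'a) measure \<Rightarrow> ('a \<times> 'a) measure \<Rightarrow> 'a \<times> 'a \<Rightarrow> ennreal" where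
  "cone_cost_density \<gamma> \<gamma>0 \<gamma>1 p =
     ennreal (cone_cost (enn2real (RN_deriv \<gamma> \<gamma>0 p)) (fst p) (enn2real (RN_deriv \<gamma> \<gamma>1 p)) (snd p))"

context
  fixes \<gamma> \<gamma>0 \<gamma>1 :: "((real^3) \<times> (real^3)) measure" and U V :: "(real^3) set"
  assumes sets_\<gamma>: "sets \<gamma> = sets borel_S2S2" and sigma_finite: "sigma_finite_measure \<gamma>"
    and ac0: "absolutely_continuous \<gamma> \<gamma>0" and ac1: "absolutely_continuous \<gamma> \<gamma>1"
    and fb0: "finite_borel_S2S2 \<gamma>0" and fb1: "finite_borel_S2S2 \<gamma>1"
    and U: "finite U" "U \<subseteq> S2" and V: "finite V" "V \<subseteq> S2"
    and null0: "emeasure \<gamma>0 ((S2 - U) \<times> S2) = 0" and null1: "emeasure \<gamma>1 (S2 \<times> (S2 - V)) = 0"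
begin

interpretation sigma_finite_measure \<gamma>
  by (fact sigma_finite)

interpretation \<gamma>0: finite_measure \<gamma>0
  using fb0 by (simp add: finite_borel_S2S2_def)

interpretation \<gamma>1: finite_measure \<gamma>1
  using fb1 by (simp add: finite_borel_S2S2_def)

lemma AE_cone_cost_density_eq:
  "AE p in \<gamma>. cone_cost_density \<gamma> \<gamma>0 \<gamma>1 p = (\<Sum>q\<in>U \<times> V. cone_cost_density \<gamma> \<gamma>0 \<gamma>1 q * indicator {q} p)
      + RN_deriv \<gamma> \<gamma>0 p * indicator (U \<times> (S2 - V)) p + RN_deriv \<gamma> \<gamma>1 p * indicator ((S2 - U) \<times> V) p"
proof -
  have sets0: "sets \<gamma>0 = sets \<gamma>" and sets1: "sets \<gamma>1 = sets \<gamma>"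
    using fb0 fb1 sets_\<gamma> by (simp_all add: finite_borel_S2S2_def)
  have space_\<gamma>: "space \<gamma> = S2 \<times> S2"
    using sets_eq_imp_space_eq[OF sets_\<gamma>] by (simp add: space_borel_S2S2)
  have "(S2 - U) \<times> S2 \<in> sets \<gamma>" "S2 \<times> (S2 - V) \<in> sets \<gamma>"
    using U V sets_\<gamma>
    by (simp_all add: Times_in_sets_borel_S2S2 S2_in_sets_borel_S2 S2_Diff_in_sets_borel_S2 finite_in_sets_borel_S2)
  then have "AE p in \<gamma>. p \<in> (S2 - U) \<times> S2 \<longrightarrow> RN_deriv \<gamma> \<gamma>0 p = 0"
    and "AE p in \<gamma>. p \<in> S2 \<times> (S2 - V) \<longrightarrow> RN_deriv \<gamma> \<gamma>1 p = 0"
    using AE_RN_deriv_eq_0[OF ac0 sets0 _ null0] AE_RN_deriv_eq_0[OF ac1 sets1 _ null1] by simp_all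
  with AE_space RN_deriv_finite[OF \<gamma>0.sigma_finite_measure_axioms ac0 sets0]
    RN_deriv_finite[OF \<gamma>1.sigma_finite_measure_axioms ac1 sets1]
  show ?thesis
  proof eventually_elim
    case (elim p)
    obtain x y where p: "p = (x, y)" and xy: "x \<in> S2" "y \<in> S2"
      using elim(1) space_\<gamma> by (cases p) auto
    let ?c = "cone_cost_density \<gamma> \<gamma>0 \<gamma>1"
    have atoms: "(\<Sum>q\<in>U \<times> V. ?c q * indicator {q} p) = (if p \<in> U \<times> V then ?c p else 0)"
      using U(1) V(1) by (simp add: indicator_def if_distrib[of "(*) _"] sum.delta' cong: if_cong)
    have split: "?c p = (if x \<in> U \<and> y \<in> V then ?c p else 0)
                + (if x \<in> U \<and> y \<notin> V then RN_deriv \<gamma> \<gamma>0 p else 0)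
                + (if x \<notin> U \<and> y \<in> V then RN_deriv \<gamma> \<gamma>1 p else 0)"
      unfolding cone_cost_density_def p fst_conv snd_conv
      by (rule ennreal_cone_cost_split) (use elim xy in \<open>auto simp: p norm_S2\<close>)
    show ?case
      by (rule trans[OF split]) (use xy atoms in \<open>simp add: p indicator_def\<close>)
  qed
qed

lemma nn_integral_cone_cost_density:
  "(\<integral>\<^sup>+ p. cone_cost_density \<gamma> \<gamma>0 \<gamma>1 p \<partial>\<gamma>)
     = ennreal ((\<Sum>q\<in>U \<times> V. cone_cost (measure \<gamma>0 {q}) (fst q) (measure \<gamma>1 {q}) (snd q))
          + measure \<gamma>0 (U \<times> (S2 - V)) + measure \<gamma>1 ((S2 - U) \<times> V))"
proof -
  have sets0: "sets \<gamma>0 = sets \<gamma>" and sets1: "sets \<gamma>1 = sets \<gamma>"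
    using fb0 fb1 sets_\<gamma> by (simp_all add: finite_borel_S2S2_def)
  let ?c = "cone_cost_density \<gamma> \<gamma>0 \<gamma>1"
  have [measurable]: "U \<times> (S2 - V) \<in> sets \<gamma>" "(S2 - U) \<times> V \<in> sets \<gamma>"
    using U V sets_\<gamma> by (simp_all add: Times_in_sets_borel_S2S2 S2_Diff_in_sets_borel_S2 finite_in_sets_borel_S2)
  have singleton_sets: "{q} \<in> sets \<gamma>" if "q \<in> U \<times> V" for q
    using that U V sets_\<gamma> by (auto intro!: singleton_in_sets_borel_S2S2)
  have atoms_measurable: "(\<lambda>p. \<Sum>q\<in>U \<times> V. ?c q * indicator {q} p) \<in> borel_measurable \<gamma>"
    using singleton_sets by (intro borel_measurable_sum borel_measurable_times_ennreal) auto
  have RN_deriv_indicator: "(\<integral>\<^sup>+p. RN_deriv \<gamma> N p * indicator E p \<partial>\<gamma>) = emeasure N E"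
    if "absolutely_continuous \<gamma> N" "sets N = sets \<gamma>" "E \<in> sets \<gamma>" for N E
    using RN_deriv_nn_integral[OF that(1,2), of "indicator E"] that(2,3) by simp
  have "(\<integral>\<^sup>+p. ?c p \<partial>\<gamma>) = (\<integral>\<^sup>+p. (\<Sum>q\<in>U \<times> V. ?c q * indicator {q} p)
      + RN_deriv \<gamma> \<gamma>0 p * indicator (U \<times> (S2 - V)) p + RN_deriv \<gamma> \<gamma>1 p * indicator ((S2 - U) \<times> V) p \<partial>\<gamma>)"
    by (rule nn_integral_cong_AE[OF AE_cone_cost_density_eq])
  also have "\<dots> = (\<integral>\<^sup>+p. (\<Sum>q\<in>U \<times> V. ?c q * indicator {q} p) \<partial>\<gamma>)
      + (\<integral>\<^sup>+p. RN_deriv \<gamma> \<gamma>0 p * indicator (U \<times> (S2 - V)) p \<partial>\<gamma>)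
      + (\<integral>\<^sup>+p. RN_deriv \<gamma> \<gamma>1 p * indicator ((S2 - U) \<times> V) p \<partial>\<gamma>)"
    using atoms_measurable by (simp add: nn_integral_add)
  also have "(\<integral>\<^sup>+p. (\<Sum>q\<in>U \<times> V. ?c q * indicator {q} p) \<partial>\<gamma>) = (\<Sum>q\<in>U \<times> V. ?c q * emeasure \<gamma> {q})"
    using singleton_sets by (simp add: nn_integral_sum nn_integral_cmult_indicator)
  also have "\<dots> = (\<Sum>q\<in>U \<times> V. ennreal (cone_cost (measure \<gamma>0 {q}) (fst q) (measure \<gamma>1 {q}) (snd q)))"
    using singleton_sets \<gamma>0.finite_measure_axioms \<gamma>1.finite_measure_axioms ac0 ac1 sets0 sets1
    by (intro sum.cong refl) (simp add: cone_cost_density_def cone_cost_RN_deriv_singleton)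
  also have "(\<integral>\<^sup>+p. RN_deriv \<gamma> \<gamma>0 p * indicator (U \<times> (S2 - V)) p \<partial>\<gamma>) = emeasure \<gamma>0 (U \<times> (S2 - V))"
    using ac0 sets0 by (rule RN_deriv_indicator) simp
  also have "(\<integral>\<^sup>+p. RN_deriv \<gamma> \<gamma>1 p * indicator ((S2 - U) \<times> V) p \<partial>\<gamma>) = emeasure \<gamma>1 ((S2 - U) \<times> V)"
    using ac1 sets1 by (rule RN_deriv_indicator) simp
  finally show ?thesis
    by (simp add: \<gamma>0.emeasure_eq_measure \<gamma>1.emeasure_eq_measure sum_ennreal cone_cost_nonneg
        ennreal_plus sum_nonneg)
qed

end

section \<open>The discrete semi-coupling\<close>

lemma sum_atMost_split_0: "(\<Sum>i\<le>(m::nat). f i) = f 0 + (\<Sum>i\<in>{1..m}. f i)"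
  by (simp add: atMost_atLeast0 sum.atLeast_Suc_atMost)

locale discrete_marginals =
  fixes m :: nat and a :: "nat \<Rightarrow> real" and u :: "nat \<Rightarrow> real^3"
    and n :: nat and b :: "nat \<Rightarrow> real" and v :: "nat \<Rightarrow> real^3"
    and \<gamma>0 \<gamma>1 :: "((real^3) \<times> (real^3)) measure"
  assumes a_pos: "\<forall>i\<in>{1..m}. a i > 0" and b_pos: "\<forall>j\<in>{1..n}. b j > 0"
    and u_S2: "\<forall>i\<in>{1..m}. u i \<in> S2" and v_S2: "\<forall>j\<in>{1..n}. v j \<in> S2"
    and Gamma: "Gamma m a u n b v \<gamma>0 \<gamma>1"
begin

definition U :: "(real^3) set" where
  "U = u ` {1..m}"

definition V :: "(real^3) set" where
  "V = v ` {1..n}"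

abbreviation \<alpha> :: "nat \<Rightarrow> real" where
  "\<alpha> \<equiv> atom_share a u {1..m}"

abbreviation \<beta> :: "nat \<Rightarrow> real" where
  "\<beta> \<equiv> atom_share b v {1..n}"

definition A :: "nat \<Rightarrow> nat \<Rightarrow> real" where
  "A i j = (if i = 0 then 0
            else if j = 0 then \<alpha> i * measure \<gamma>0 ({u i} \<times> (S2 - V))
            else \<alpha> i * \<beta> j * measure \<gamma>0 {(u i, v j)})"

definition B :: "nat \<Rightarrow> nat \<Rightarrow> real" where
  "B i j = (if j = 0 then 0
            else if i = 0 then \<beta> j * measure \<gamma>1 ((S2 - U) \<times> {v j})
            else \<alpha> i * \<beta> j * measure \<gamma>1 {(u i, v j)})"

lemma finite_borel_\<gamma>0: "finite_borel_S2S2 \<gamma>0"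
  and finite_borel_\<gamma>1: "finite_borel_S2S2 \<gamma>1"
  using Gamma by (simp_all add: Gamma_def)

lemma U_finite: "finite U" and U_S2: "U \<subseteq> S2" and V_finite: "finite V" and V_S2: "V \<subseteq> S2"
  using u_S2 v_S2 by (auto simp: U_def V_def)

lemma U_sets: "U \<in> sets borel_S2" and V_sets: "V \<in> sets borel_S2"
  using U_finite U_S2 V_finite V_S2 by (simp_all add: finite_in_sets_borel_S2)

lemma \<alpha>_nonneg: "0 \<le> \<alpha> i" if "i \<in> {1..m}"
  using a_pos that by (intro atom_share_nonneg) (auto intro: less_imp_le)

lemma \<beta>_nonneg: "0 \<le> \<beta> j" if "j \<in> {1..n}"
  using b_pos that by (intro atom_share_nonneg) (auto intro: less_imp_le)

lemma emeasure_\<gamma>0_Times_S2: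
  "X \<in> sets borel_S2 \<Longrightarrow> emeasure \<gamma>0 (X \<times> S2) = ennreal (\<Sum>i\<in>{1..m}. a i * indicator X (u i))"
  using Gamma emeasure_distr_fst_borel_S2[of \<gamma>0 X]
  by (simp add: Gamma_def is_discrete_measure_def finite_borel_S2S2_def)

lemma emeasure_\<gamma>1_S2_Times:
  "Y \<in> sets borel_S2 \<Longrightarrow> emeasure \<gamma>1 (S2 \<times> Y) = ennreal (\<Sum>j\<in>{1..n}. b j * indicator Y (v j))"
  using Gamma emeasure_distr_snd_borel_S2[of \<gamma>1 Y]
  by (simp add: Gamma_def is_discrete_measure_def finite_borel_S2S2_def)

lemma emeasure_\<gamma>0_outside: "emeasure \<gamma>0 ((S2 - U) \<times> S2) = 0"
  using emeasure_\<gamma>0_Times_S2[OF S2_Diff_in_sets_borel_S2[OF U_sets]]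
  by (simp add: U_def indicator_def)

lemma emeasure_\<gamma>1_outside: "emeasure \<gamma>1 (S2 \<times> (S2 - V)) = 0"
  using emeasure_\<gamma>1_S2_Times[OF S2_Diff_in_sets_borel_S2[OF V_sets]]
  by (simp add: V_def indicator_def)

lemma \<alpha>_mult_measure_\<gamma>0_fiber:
  assumes i: "i \<in> {1..m}"
  shows "\<alpha> i * measure \<gamma>0 ({u i} \<times> S2) = a i"
proof -
  have pos: "0 < (\<Sum>k\<in>{k\<in>{1..m}. u k = u i}. a k)"
    using a_pos i by (intro sum_fiber_pos) auto
  have "emeasure \<gamma>0 ({u i} \<times> S2) = ennreal (\<Sum>k\<in>{1..m}. a k * indicator {u i} (u k))"
    using i u_S2 by (intro emeasure_\<gamma>0_Times_S2 finite_in_sets_borel_S2) auto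
  also have "(\<Sum>k\<in>{1..m}. a k * indicator {u i} (u k)) = (\<Sum>k\<in>{k\<in>{1..m}. u k = u i}. a k)"
    by (simp add: sum.inter_filter indicator_def Int_def)
  finally have "measure \<gamma>0 ({u i} \<times> S2) = (\<Sum>k\<in>{k\<in>{1..m}. u k = u i}. a k)"
    using pos by (simp add: measure_def)
  moreover have "\<alpha> i * (\<Sum>k\<in>{k\<in>{1..m}. u k = u i}. a k) = a i"
    using a_pos i by (intro atom_share_mult_sum_fiber) auto
  ultimately show ?thesis
    by simp
qed

lemma \<beta>_mult_measure_\<gamma>1_fiber:
  assumes j: "j \<in> {1..n}"
  shows "\<beta> j * measure \<gamma>1 (S2 \<times> {v j}) = b j"
proof -
  have pos: "0 < (\<Sum>k\<in>{k\<in>{1..n}. v k = v j}. b k)"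
    using b_pos j by (intro sum_fiber_pos) auto
  have "emeasure \<gamma>1 (S2 \<times> {v j}) = ennreal (\<Sum>k\<in>{1..n}. b k * indicator {v j} (v k))"
    using j v_S2 by (intro emeasure_\<gamma>1_S2_Times finite_in_sets_borel_S2) auto
  also have "(\<Sum>k\<in>{1..n}. b k * indicator {v j} (v k)) = (\<Sum>k\<in>{k\<in>{1..n}. v k = v j}. b k)"
    by (simp add: sum.inter_filter indicator_def Int_def)
  finally have "measure \<gamma>1 (S2 \<times> {v j}) = (\<Sum>k\<in>{k\<in>{1..n}. v k = v j}. b k)"
    using pos by (simp add: measure_def)
  moreover have "\<beta> j * (\<Sum>k\<in>{k\<in>{1..n}. v k = v j}. b k) = b j"
    using b_pos j by (intro atom_share_mult_sum_fiber) auto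
  ultimately show ?thesis
    by simp
qed

lemma A_nonneg: "i \<le> m \<Longrightarrow> j \<le> n \<Longrightarrow> 0 \<le> A i j"
  using \<alpha>_nonneg[of i] \<beta>_nonneg[of j] by (simp add: A_def)

lemma B_nonneg: "i \<le> m \<Longrightarrow> j \<le> n \<Longrightarrow> 0 \<le> B i j"
  using \<alpha>_nonneg[of i] \<beta>_nonneg[of j] by (simp add: B_def)

lemma sum_A_row:
  assumes i: "i \<in> {1..m}"
  shows "(\<Sum>j\<le>n. A i j) = a i"
proof -
  have "(\<Sum>j\<le>n. A i j) = A i 0 + (\<Sum>j\<in>{1..n}. A i j)"
    by (rule sum_atMost_split_0)
  also have "(\<Sum>j\<in>{1..n}. A i j) = \<alpha> i * (\<Sum>j\<in>{1..n}. \<beta> j * measure \<gamma>0 {(u i, v j)})"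
    using i by (simp add: A_def sum_distrib_left mult.assoc)
  also have "(\<Sum>j\<in>{1..n}. \<beta> j * measure \<gamma>0 {(u i, v j)}) = (\<Sum>y\<in>V. measure \<gamma>0 {(u i, y)})"
    unfolding V_def
    by (rule sum_atom_share_mult[where h = "\<lambda>y. measure \<gamma>0 {(u i, y)}"]) (use b_pos in auto)
  also have "A i 0 + \<alpha> i * \<dots> = \<alpha> i * measure \<gamma>0 ({u i} \<times> S2)"
    using i u_S2 measure_Times_split_right[OF finite_borel_\<gamma>0 _ S2_in_sets_borel_S2 V_finite V_S2, of "{u i}"]
    by (simp add: A_def distrib_left finite_in_sets_borel_S2)
  finally show ?thesis
    using \<alpha>_mult_measure_\<gamma>0_fiber[OF i] by simp
qed

lemma sum_B_col:
  assumes j: "j \<in> {1..n}"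
  shows "(\<Sum>i\<le>m. B i j) = b j"
proof -
  have "(\<Sum>i\<le>m. B i j) = B 0 j + (\<Sum>i\<in>{1..m}. B i j)"
    by (rule sum_atMost_split_0)
  also have "(\<Sum>i\<in>{1..m}. B i j) = \<beta> j * (\<Sum>i\<in>{1..m}. \<alpha> i * measure \<gamma>1 {(u i, v j)})"
    using j by (simp add: B_def sum_distrib_left ac_simps)
  also have "(\<Sum>i\<in>{1..m}. \<alpha> i * measure \<gamma>1 {(u i, v j)}) = (\<Sum>x\<in>U. measure \<gamma>1 {(x, v j)})"
    unfolding U_def
    by (rule sum_atom_share_mult[where h = "\<lambda>x. measure \<gamma>1 {(x, v j)}"]) (use a_pos in auto)
  also have "B 0 j + \<beta> j * \<dots> = \<beta> j * measure \<gamma>1 (S2 \<times> {v j})"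
    using j v_S2 measure_Times_split_left[OF finite_borel_\<gamma>1 S2_in_sets_borel_S2 _ U_finite U_S2, of "{v j}"]
    by (simp add: B_def distrib_left finite_in_sets_borel_S2)
  finally show ?thesis
    using \<beta>_mult_measure_\<gamma>1_fiber[OF j] by simp
qed

lemma A_B_adm: "A_adm m a n b A B"
  unfolding A_adm_def
  by (simp add: A_nonneg B_nonneg sum_A_row sum_B_col) (simp add: A_def B_def)

definition cost :: "nat \<Rightarrow> nat \<Rightarrow> real" where
  "cost i j = cone_cost (A i j) (if i = 0 then e1 else u i) (B i j) (if j = 0 then e1 else v j)"

lemma cost_0_0: "cost 0 0 = 0"
  by (simp add: cost_def A_def B_def cone_cost_def)

lemma cost_column_0:
  assumes "i \<in> {1..m}"
  shows "cost i 0 = \<alpha> i * measure \<gamma>0 ({u i} \<times> (S2 - V))"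
  using assms u_S2 \<alpha>_nonneg[OF assms] by (simp add: cost_def A_def B_def cone_cost_0_right norm_S2)

lemma cost_row_0:
  assumes "j \<in> {1..n}"
  shows "cost 0 j = \<beta> j * measure \<gamma>1 ((S2 - U) \<times> {v j})"
  using assms v_S2 \<beta>_nonneg[OF assms] by (simp add: cost_def A_def B_def cone_cost_0_left norm_S2)

lemma cost_atom:
  assumes "i \<in> {1..m}" "j \<in> {1..n}"
  shows "cost i j = \<alpha> i * \<beta> j
           * cone_cost (measure \<gamma>0 {(u i, v j)}) (u i) (measure \<gamma>1 {(u i, v j)}) (v j)"
  using assms \<alpha>_nonneg[OF assms(1)] \<beta>_nonneg[OF assms(2)]
  by (simp add: cost_def A_def B_def cone_cost_scale)

lemma sum_cost_row_0: "(\<Sum>j\<le>n. cost 0 j) = measure \<gamma>1 ((S2 - U) \<times> V)"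
proof -
  have "(\<Sum>j\<le>n. cost 0 j) = (\<Sum>j\<in>{1..n}. \<beta> j * measure \<gamma>1 ((S2 - U) \<times> {v j}))"
    by (simp add: sum_atMost_split_0 cost_0_0 cost_row_0)
  also have "\<dots> = (\<Sum>y\<in>V. measure \<gamma>1 ((S2 - U) \<times> {y}))"
    unfolding V_def
    by (rule sum_atom_share_mult[where h = "\<lambda>y. measure \<gamma>1 ((S2 - U) \<times> {y})"]) (use b_pos in auto)
  also have "\<dots> = measure \<gamma>1 ((S2 - U) \<times> V)"
    using measure_Times_split_right[OF finite_borel_\<gamma>1 S2_Diff_in_sets_borel_S2[OF U_sets] V_sets V_finite order_refl]
    by simp
  finally show ?thesis .
qed

lemma sum_cost_row:
  assumes i: "i \<in> {1..m}"
  shows "(\<Sum>j\<le>n. cost i j) = \<alpha> i * (measure \<gamma>0 ({u i} \<times> (S2 - V))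
            + (\<Sum>y\<in>V. cone_cost (measure \<gamma>0 {(u i, y)}) (u i) (measure \<gamma>1 {(u i, y)}) y))"
proof -
  have "(\<Sum>j\<in>{1..n}. cost i j) = \<alpha> i * (\<Sum>j\<in>{1..n}. \<beta> j
           * cone_cost (measure \<gamma>0 {(u i, v j)}) (u i) (measure \<gamma>1 {(u i, v j)}) (v j))"
    using i by (simp add: cost_atom sum_distrib_left mult.assoc)
  also have "(\<Sum>j\<in>{1..n}. \<beta> j * cone_cost (measure \<gamma>0 {(u i, v j)}) (u i) (measure \<gamma>1 {(u i, v j)}) (v j))
      = (\<Sum>y\<in>V. cone_cost (measure \<gamma>0 {(u i, y)}) (u i) (measure \<gamma>1 {(u i, y)}) y)"
    unfolding V_def
    by (rule sum_atom_share_mult[where h = "\<lambda>y. cone_cost (measure \<gamma>0 {(u i, y)}) (u i) (measure \<gamma>1 {(u i, y)}) y"])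
      (use b_pos in auto)
  finally show ?thesis
    using i by (simp add: sum_atMost_split_0[of "cost i"] cost_column_0 distrib_left)
qed

lemma sum_cost:
  "(\<Sum>i\<le>m. \<Sum>j\<le>n. cost i j)
     = (\<Sum>q\<in>U \<times> V. cone_cost (measure \<gamma>0 {q}) (fst q) (measure \<gamma>1 {q}) (snd q))
       + measure \<gamma>0 (U \<times> (S2 - V)) + measure \<gamma>1 ((S2 - U) \<times> V)"
proof -
  have "(\<Sum>i\<in>{1..m}. \<Sum>j\<le>n. cost i j) = (\<Sum>i\<in>{1..m}. \<alpha> i * (measure \<gamma>0 ({u i} \<times> (S2 - V))
            + (\<Sum>y\<in>V. cone_cost (measure \<gamma>0 {(u i, y)}) (u i) (measure \<gamma>1 {(u i, y)}) y)))"
    by (rule sum.cong) (simp_all add: sum_cost_row)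
  also have "\<dots> = (\<Sum>x\<in>U. measure \<gamma>0 ({x} \<times> (S2 - V))
            + (\<Sum>y\<in>V. cone_cost (measure \<gamma>0 {(x, y)}) x (measure \<gamma>1 {(x, y)}) y))"
    unfolding U_def
    by (rule sum_atom_share_mult[where h = "\<lambda>x. measure \<gamma>0 ({x} \<times> (S2 - V))
            + (\<Sum>y\<in>V. cone_cost (measure \<gamma>0 {(x, y)}) x (measure \<gamma>1 {(x, y)}) y)"]) (use a_pos in auto)
  also have "\<dots> = measure \<gamma>0 (U \<times> (S2 - V))
      + (\<Sum>q\<in>U \<times> V. cone_cost (measure \<gamma>0 {q}) (fst q) (measure \<gamma>1 {q}) (snd q))"
    using measure_Times_split_left[OF finite_borel_\<gamma>0 U_sets S2_Diff_in_sets_borel_S2[OF V_sets] U_finite order_refl]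
    by (simp add: sum.distrib sum.cartesian_product case_prod_unfold)
  finally show ?thesis
    by (simp add: sum_atMost_split_0[of "\<lambda>i. \<Sum>j\<le>n. cost i j"] sum_cost_row_0)
qed

end

theorem lemma2p5:
  fixes m n :: nat
    and a b :: "nat \<Rightarrow> real"
    and u v :: "nat \<Rightarrow> real^3"
    and \<gamma>0 \<gamma>1 :: "((real^3) \<times> (real^3)) measure"
  assumes a_pos: "\<forall>i\<in>{1..m}. a i > 0"
    and b_pos: "\<forall>j\<in>{1..n}. b j > 0"
    and u_S2: "\<forall>i\<in>{1..m}. u i \<in> S2"
    and v_S2: "\<forall>j\<in>{1..n}. v j \<in> S2"
    and Gam: "Gamma m a u n b v \<gamma>0 \<gamma>1"
  shows "\<exists>A B. A_adm m a n b A B \<and>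
    (\<forall>\<gamma> :: ((real^3) \<times> (real^3)) measure.
       sets \<gamma> = sets borel_S2S2 \<and> sigma_finite_measure \<gamma> \<and>
       absolutely_continuous \<gamma> \<gamma>0 \<and> absolutely_continuous \<gamma> \<gamma>1 \<longrightarrow>
       (\<integral>\<^sup>+ p. ennreal ((norm (sqrt (enn2real (RN_deriv \<gamma> \<gamma>0 p)) *\<^sub>R fst p
                                 - sqrt (enn2real (RN_deriv \<gamma> \<gamma>1 p)) *\<^sub>R snd p))\<^sup>2) \<partial>\<gamma>)
       = ennreal (\<Sum>i\<le>m. \<Sum>j\<le>n.
           (norm (sqrt (A i j) *\<^sub>R (if i = 0 then e1 else u i)
                  - sqrt (B i j) *\<^sub>R (if j = 0 then e1 else v j)))\<^sup>2))"
proof -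
  interpret discrete_marginals m a u n b v \<gamma>0 \<gamma>1
    using assms by unfold_locales
  have "(\<integral>\<^sup>+ p. cone_cost_density \<gamma> \<gamma>0 \<gamma>1 p \<partial>\<gamma>) = ennreal (\<Sum>i\<le>m. \<Sum>j\<le>n. cost i j)"
    if "sets \<gamma> = sets borel_S2S2" "sigma_finite_measure \<gamma>"
      "absolutely_continuous \<gamma> \<gamma>0" "absolutely_continuous \<gamma> \<gamma>1" for \<gamma>
    using nn_integral_cone_cost_density[OF that finite_borel_\<gamma>0 finite_borel_\<gamma>1
        U_finite U_S2 V_finite V_S2 emeasure_\<gamma>0_outside emeasure_\<gamma>1_outside]
    by (simp add: sum_cost)
  then show ?thesis
    using A_B_adm unfolding cone_cost_density_def cost_def cone_cost_def by blast
qed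

end
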